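(* Let $n,r,d$ be positive integers and let $S$ be a set of $n$ points in $\mathbb{R}^d$. Assign to each point of $S$ a label from $\{1,\dots,r\}$, uniformly and independently, and let $P$ be the resulting random partition of $S$ (the parts being the nonempty label classes). Then the probability that $P$ is a Tverberg partition of $S$ into $r$ parts whose degree in $G_T[S,r]$ equals $n(r-1)$ is at least \[1-r^{(r-1)(d+1)}\,n^{(r-1)(d+1)}\exp\!\left(\frac{-2(n-r)^2}{nr^2}\right).\]
   Context: A partition of a finite set $S$ into $r$ parts is a collection of $r$ nonempty pairwise disjoint subsets $P_1,\dots,P_r$ (unordered) whose union is $S$. For a finite $S\subset\mathbb{R}^d$, a Tverberg partition of $S$ into $r$ parts is a partition $P_1,\dots,P_r$ of $S$ into $r$ parts with $\bigcap_{j=1}^r\operatorname{conv}(P_j)\neq\emptyset$. For two partitions $P,P'$ of $S$, the partition distance $D(P,P')$ is the minimum number of elements of $S$ that must be removed so that $P$ and $P'$ restricted to the remaining elements coincide. The Tverberg $r$-partition graph $G_T[S,r]$ has as vertices all Tverberg partitions of $S$ into $r$ parts, with an edge between $P$ and $P'$ if and only if $D(P,P')=1$. *)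

theory Defs
  imports "HOL-Analysis.Analysis"
begin

definition is_partition :: "'a set \<Rightarrow> nat \<Rightarrow> 'a set set \<Rightarrow> bool" where
  "is_partition S r P \<longleftrightarrow> (\<forall>B\<in>P. B \<noteq> {} \<and> B \<subseteq> S) \<and> \<Union>P = S \<and>
     (\<forall>B\<in>P. \<forall>C\<in>P. B \<noteq> C \<longrightarrow> B \<inter> C = {}) \<and> finite P \<and> card P = r"

definition tverberg_partition :: "('a::real_vector) set \<Rightarrow> nat \<Rightarrow> 'a set set \<Rightarrow> bool" where
  "tverberg_partition S r P \<longleftrightarrow> is_partition S r P \<and> (\<Inter>B\<in>P. convex hull B) \<noteq> {}"

definition restrict_partition :: "'a set set \<Rightarrow> 'a set \<Rightarrow> 'a set set" where
  "restrict_partition P T = ((\<lambda>B. B \<inter> T) ` P) - {{}}"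

definition partition_dist :: "'a set \<Rightarrow> 'a set set \<Rightarrow> 'a set set \<Rightarrow> nat" where
  "partition_dist S P P' = (LEAST k. \<exists>R. R \<subseteq> S \<and> card R = k \<and>
       restrict_partition P (S - R) = restrict_partition P' (S - R))"

text \<open>Degree of P in the Tverberg r-partition graph G_T[S,r].\<close>
definition tverberg_degree :: "('a::real_vector) set \<Rightarrow> nat \<Rightarrow> 'a set set \<Rightarrow> nat" where
  "tverberg_degree S r P = card {P'. tverberg_partition S r P' \<and> partition_dist S P P' = 1}"

definition label_partition :: "'a set \<Rightarrow> nat \<Rightarrow> ('a \<Rightarrow> nat) \<Rightarrow> 'a set set" where
  "label_partition S r f = (\<lambda>i. {x\<in>S. f x = i}) ` {1..r} - {{}}"

end

theory Submission
  imports Defs "HOL-Probability.Probability"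
begin

text \<open>
  Call a labelling \<open>f\<close> almost separated if there are affine functions \<open>h\<^sub>1, ..., h\<^sub>r\<close>
  summing to zero with \<open>h\<^bsub>f x\<^esub> x > 0\<close> for all but at most one point \<open>x\<close>.
  If \<open>f\<close> is not almost separated, then its partition and every partition obtained by
  relabelling one point are Tverberg: if the convex hulls of the classes had no common point,
  a point minimising the sum of squared distances to them would produce such functions,
  positive on every class. Every class then has at least two points, so the neighbours of the
  partition in the Tverberg graph are exactly its \<open>n (r - 1)\<close> one-point relabellings.

  As the \<open>h\<^sub>j\<close> sum to zero, the labels
  \<open>j\<close> with \<open>h\<^sub>j x > 0\<close> lie in a set of at most \<open>r - 1\<close> labels determined by the traces
  on \<open>S\<close> of the halfspaces \<open>h\<^sub>j > 0\<close>, \<open>j < r\<close>. By Radon's theorem halfspaces shatter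
  no \<open>d + 2\<close> points, so by Pajor's form of the Sauer-Shelah lemma there are at most
  \<open>(n + 1)\<^sup>d\<^sup>+\<^sup>1\<close> traces. For fixed traces, a uniformly random labelling respects the
  allowed sets at all but at most one point with probability \<open>P[Bin(n, 1/r) \<le> 1]\<close>, which
  Hoeffding's inequality bounds by the exponential term.
\<close>

section \<open>Label classes\<close>

abbreviation label_class :: "'a set \<Rightarrow> ('a \<Rightarrow> nat) \<Rightarrow> nat \<Rightarrow> 'a set" where
  "label_class S f j \<equiv> {x\<in>S. f x = j}"

lemma label_partition_eq_image:
  assumes "\<forall>j\<in>{1..r}. label_class S f j \<noteq> {}"
  shows "label_partition S r f = label_class S f ` {1..r}"
  using assms unfolding label_partition_def by auto

lemma inj_on_label_class:
  assumes "\<forall>j\<in>J. label_class S f j \<noteq> {}"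
  shows "inj_on (label_class S f) J"
  using assms by (auto intro!: inj_onI)

lemma card_label_partition:
  assumes "\<forall>j\<in>{1..r}. label_class S f j \<noteq> {}"
  shows "card (label_partition S r f) = r"
  using card_image[OF inj_on_label_class[OF assms]] by (simp add: label_partition_eq_image[OF assms])

lemma is_partition_label_partition:
  assumes "\<forall>x\<in>S. f x \<in> {1..r}" and "\<forall>j\<in>{1..r}. label_class S f j \<noteq> {}"
  shows "is_partition S r (label_partition S r f)"
  using assms card_label_partition[OF assms(2)]
  unfolding is_partition_def label_partition_eq_image[OF assms(2)] by auto

lemma label_class_eq_if_label_partition_eq:
  assumes "label_partition S r f = label_partition S r g" and "x \<in> S"
    and "f x \<in> {1..r}" and "g x \<in> {1..r}"
  shows "label_class S f (f x) = label_class S g (g x)"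
proof -
  have "label_class S f (f x) \<in> label_partition S r g"
    using assms unfolding label_partition_def by blast
  then obtain j where j: "label_class S f (f x) = label_class S g j"
    unfolding label_partition_def by blast
  have "x \<in> label_class S g j"
    using \<open>x \<in> S\<close> unfolding j[symmetric] by simp
  then show ?thesis
    using j by simp
qed

lemma restrict_label_partition:
  assumes "T \<subseteq> S"
  shows "restrict_partition (label_partition S r f) T = label_partition T r f"
proof -
  have "(\<lambda>B. B \<inter> T) ` (label_class S f ` {1..r} - {{}}) - {{}}
      = (\<lambda>B. B \<inter> T) ` label_class S f ` {1..r} - {{}}"
    by auto
  also have "\<dots> = label_class T f ` {1..r} - {{}}"
    using assms by (auto simp: image_image)
  finally show ?thesis
    unfolding restrict_partition_def label_partition_def .
qed

lemma label_partition_cong: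
  assumes "\<forall>x\<in>T. f x = g x"
  shows "label_partition T r f = label_partition T r g"
proof -
  have "\<And>j. label_class T f j = label_class T g j"
    using assms by auto
  then show ?thesis
    unfolding label_partition_def by simp
qed

section \<open>Separating affine functions\<close>

lemma sum_power2_norm_diff_centroid:
  fixes y :: "'i \<Rightarrow> 'a::real_inner"
  assumes "finite I" and "real (card I) *\<^sub>R m = (\<Sum>i\<in>I. y i)"
  shows "(\<Sum>i\<in>I. (norm (c - y i))\<^sup>2)
    = (\<Sum>i\<in>I. (norm (m - y i))\<^sup>2) + real (card I) * (norm (c - m))\<^sup>2"
proof -
  have centred: "(\<Sum>i\<in>I. m - y i) = 0"
    using assms by (simp add: sum_subtractf sum_constant_scaleR)
  have "(norm (c - y i))\<^sup>2
      = (norm (c - m))\<^sup>2 + 2 * ((c - m) \<bullet> (m - y i)) + (norm (m - y i))\<^sup>2" for i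
    by (simp add: power2_norm_eq_inner inner_diff_left inner_diff_right inner_commute algebra_simps)
  then have "(\<Sum>i\<in>I. (norm (c - y i))\<^sup>2) = real (card I) * (norm (c - m))\<^sup>2
      + 2 * ((c - m) \<bullet> (\<Sum>i\<in>I. m - y i)) + (\<Sum>i\<in>I. (norm (m - y i))\<^sup>2)"
    by (simp add: sum.distrib inner_sum_right sum_distrib_left)
  then show ?thesis
    using centred by simp
qed

text \<open>A minimiser of the sum of squared distances to the \<open>K i\<close> is the centroid of its
  projections onto them.\<close>

lemma closest_points_centroid_fixpoint:
  fixes K :: "'i \<Rightarrow> 'a::euclidean_space set"
  assumes I: "finite I" and K: "\<And>i. i \<in> I \<Longrightarrow> compact (K i) \<and> convex (K i) \<and> K i \<noteq> {}"
  obtains c where "(\<Sum>i\<in>I. closest_point (K i) c) = real (card I) *\<^sub>R c"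
proof (cases "I = {}")
  case True
  then show ?thesis
    using that by simp
next
  case False
  define H where "H = convex hull (\<Union>i\<in>I. K i)"
  define g where "g c = (\<Sum>i\<in>I. (norm (c - closest_point (K i) c))\<^sup>2)" for c
  have "compact H"
    unfolding H_def using I K by (intro compact_convex_hull compact_UN) auto
  moreover have "H \<noteq> {}"
    unfolding H_def using False K by auto
  moreover have "continuous_on H g"
    unfolding g_def using K
    by (intro continuous_intros continuous_on_closest_point) (auto intro: compact_imp_closed)
  ultimately obtain c where "c \<in> H" and c_min: "\<And>c'. c' \<in> H \<Longrightarrow> g c \<le> g c'"
    using continuous_attains_inf by metis
  define y where "y i = closest_point (K i) c" for i
  define m where "m = (1 / real (card I)) *\<^sub>R (\<Sum>i\<in>I. y i)"
  have m: "real (card I) *\<^sub>R m = (\<Sum>i\<in>I. y i)"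
    using I False by (simp add: m_def)
  have y_in: "y i \<in> K i" if "i \<in> I" for i
    using K[OF that] by (simp add: y_def closest_point_in_set compact_imp_closed)
  have "m \<in> H"
    unfolding m_def H_def scaleR_sum_right using I False y_in
    by (intro convex_sum) (auto intro: hull_inc)
  have "g m \<le> (\<Sum>i\<in>I. (norm (m - y i))\<^sup>2)"
    unfolding g_def using K y_in
    by (intro sum_mono power_mono) (auto simp: dist_norm[symmetric] closest_point_le compact_imp_closed)
  moreover have "g c = (\<Sum>i\<in>I. (norm (m - y i))\<^sup>2) + real (card I) * (norm (c - m))\<^sup>2"
    unfolding g_def y_def[symmetric] by (rule sum_power2_norm_diff_centroid[OF I m])
  moreover have "g c \<le> g m"
    using c_min \<open>m \<in> H\<close> .
  ultimately have "real (card I) * (norm (c - m))\<^sup>2 \<le> 0"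
    by linarith
  then have "c = m"
    using I False by (simp add: mult_le_0_iff)
  then show ?thesis
    using that m[symmetric] by (simp add: y_def)
qed

lemma separating_affine_functions_if_Inter_empty:
  fixes K :: "'i \<Rightarrow> 'a::euclidean_space set"
  assumes I: "finite I" and K: "\<And>i. i \<in> I \<Longrightarrow> compact (K i) \<and> convex (K i) \<and> K i \<noteq> {}"
    and disjoint: "(\<Inter>i\<in>I. K i) = {}"
  obtains a b where "(\<Sum>i\<in>I. a i) = 0" and "(\<Sum>i\<in>I. b i) = 0"
    and "\<And>i x. i \<in> I \<Longrightarrow> x \<in> K i \<Longrightarrow> 0 < a i \<bullet> x + b i"
proof -
  obtain c where c: "(\<Sum>i\<in>I. closest_point (K i) c) = real (card I) *\<^sub>R c"
    using closest_points_centroid_fixpoint[of I K] I K by blast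
  define y where "y i = closest_point (K i) c" for i
  define a where "a i = y i - c" for i
  define s where "s = (\<Sum>i\<in>I. a i \<bullet> a i)"
  define b where "b i = s / real (card I) - a i \<bullet> y i" for i
  have "I \<noteq> {}"
    using disjoint by auto
  have y_in: "y i \<in> K i" if "i \<in> I" for i
    using K[OF that] by (simp add: y_def closest_point_in_set compact_imp_closed)
  have sum_a: "(\<Sum>i\<in>I. a i) = 0"
    using c by (simp add: a_def y_def sum_subtractf sum_constant_scaleR)
  have "s > 0"
  proof -
    obtain i where "i \<in> I" "c \<notin> K i"
      using disjoint by auto
    then have "a i \<noteq> 0"
      using y_in by (auto simp: a_def)
    then show ?thesis
      unfolding s_def using I \<open>i \<in> I\<close> by (intro sum_pos2) auto
  qed
  have sum_b: "(\<Sum>i\<in>I. b i) = 0"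
  proof -
    have "(\<Sum>i\<in>I. a i \<bullet> y i) = (\<Sum>i\<in>I. a i \<bullet> a i + a i \<bullet> c)"
      by (simp add: a_def inner_diff_right)
    also have "\<dots> = s + (\<Sum>i\<in>I. a i) \<bullet> c"
      by (simp add: s_def sum.distrib inner_sum_left)
    finally show ?thesis
      using sum_a I \<open>I \<noteq> {}\<close> by (simp add: b_def sum_subtractf)
  qed
  have "0 < a i \<bullet> x + b i" if "i \<in> I" "x \<in> K i" for i x
  proof -
    have "(c - y i) \<bullet> (x - y i) \<le> 0"
      unfolding y_def using K that by (intro closest_point_dot) (auto intro: compact_imp_closed)
    then have "a i \<bullet> y i \<le> a i \<bullet> x"
      by (simp add: a_def inner_commute algebra_simps)
    moreover have "0 < s / real (card I)"
      using \<open>s > 0\<close> I \<open>I \<noteq> {}\<close> by (simp add: card_gt_0_iff)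
    ultimately show ?thesis
      by (simp add: b_def)
  qed
  with sum_a sum_b that show ?thesis
    by blast
qed

section \<open>Almost separated labellings\<close>

definition almost_separated :: "'a::euclidean_space set \<Rightarrow> nat \<Rightarrow> ('a \<Rightarrow> nat) \<Rightarrow> bool" where
  "almost_separated S r f \<longleftrightarrow> (\<exists>a b. (\<Sum>j\<in>{1..r}. a j) = 0 \<and> (\<Sum>j\<in>{1..r}. b j) = (0::real) \<and>
     card {x\<in>S. a (f x) \<bullet> x + b (f x) \<le> 0} \<le> 1)"

lemma zero_sum_constants_nonpositive_only_at:
  assumes "j \<in> {1..r}"
  obtains b :: "nat \<Rightarrow> real"
  where "(\<Sum>i\<in>{1..r}. b i) = 0" and "\<And>i. b i \<le> 0 \<longleftrightarrow> i = j"
proof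
  define b :: "nat \<Rightarrow> real" where "b i = (if i = j then 1 - real r else 1)" for i
  have "(\<Sum>i\<in>{1..r}. b i) = b j + (\<Sum>i\<in>{1..r} - {j}. 1)"
    using assms by (simp add: sum.remove b_def)
  then show "(\<Sum>i\<in>{1..r}. b i) = 0"
    using assms by (simp add: b_def of_nat_diff)
  show "b i \<le> 0 \<longleftrightarrow> i = j" for i
    using assms by (simp add: b_def)
qed

lemma two_le_card_label_class_if_not_almost_separated:
  assumes "\<not> almost_separated S r f" and "j \<in> {1..r}"
  shows "2 \<le> card (label_class S f j)"
proof (rule ccontr)
  assume "\<not> 2 \<le> card (label_class S f j)"
  moreover obtain b :: "nat \<Rightarrow> real" where "(\<Sum>i\<in>{1..r}. b i) = 0" and "\<And>i. b i \<le> 0 \<longleftrightarrow> i = j"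
    using zero_sum_constants_nonpositive_only_at[OF assms(2)] by blast
  ultimately have "almost_separated S r f"
    unfolding almost_separated_def by (intro exI[of _ "\<lambda>_. 0"] exI[of _ b]) simp
  with assms(1) show False ..
qed

lemma separating_affine_functions_if_not_tverberg:
  fixes S :: "'a::euclidean_space set"
  assumes "finite S" and g: "\<forall>x\<in>S. g x \<in> {1..r}"
    and "\<not> tverberg_partition S r (label_partition S r g)"
  obtains a b where "(\<Sum>j\<in>{1..r}. a j) = 0" and "(\<Sum>j\<in>{1..r}. b j) = (0::real)"
    and "\<And>x. x \<in> S \<Longrightarrow> 0 < a (g x) \<bullet> x + b (g x)"
proof (cases "\<forall>j\<in>{1..r}. label_class S g j \<noteq> {}")
  case True
  then have disjoint: "(\<Inter>j\<in>{1..r}. convex hull (label_class S g j)) = {}"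
    using assms is_partition_label_partition[OF g True]
    by (simp add: tverberg_partition_def label_partition_eq_image image_image)
  have K: "compact (convex hull (label_class S g j)) \<and> convex (convex hull (label_class S g j))
      \<and> convex hull (label_class S g j) \<noteq> {}" if "j \<in> {1..r}" for j
    using True that \<open>finite S\<close> by (simp add: finite_imp_compact_convex_hull)
  obtain a b where "(\<Sum>j\<in>{1..r}. a j) = 0" "(\<Sum>j\<in>{1..r}. b j) = 0"
    and pos: "\<And>j x. j \<in> {1..r} \<Longrightarrow> x \<in> convex hull (label_class S g j) \<Longrightarrow> 0 < a j \<bullet> x + b j"
    using separating_affine_functions_if_Inter_empty[OF finite_atLeastAtMost K disjoint] by blast
  moreover have "0 < a (g x) \<bullet> x + b (g x)" if "x \<in> S" for x
    using pos[of "g x" x] g that by (simp add: hull_inc)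
  ultimately show ?thesis
    using that by blast
next
  case False
  then obtain j where "j \<in> {1..r}" and empty: "label_class S g j = {}"
    by blast
  then obtain b :: "nat \<Rightarrow> real" where sum_b: "(\<Sum>i\<in>{1..r}. b i) = 0"
    and b: "\<And>i. b i \<le> 0 \<longleftrightarrow> i = j"
    using zero_sum_constants_nonpositive_only_at by blast
  show ?thesis
  proof (rule that[of "\<lambda>_. 0" b])
    show "0 < 0 \<bullet> x + b (g x)" if "x \<in> S" for x
      using b[of "g x"] empty that by auto
  qed (simp, fact sum_b)
qed

lemma tverberg_partition_if_not_almost_separated:
  fixes S :: "'a::euclidean_space set"
  assumes "finite S" and "\<not> almost_separated S r f"
    and "\<forall>x\<in>S. g x \<in> {1..r}" and "card {x\<in>S. g x \<noteq> f x} \<le> 1"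
  shows "tverberg_partition S r (label_partition S r g)"
proof (rule ccontr)
  assume "\<not> ?thesis"
  then obtain a b where sums: "(\<Sum>j\<in>{1..r}. a j) = 0" "(\<Sum>j\<in>{1..r}. b j) = (0::real)"
    and pos: "\<And>x. x \<in> S \<Longrightarrow> 0 < a (g x) \<bullet> x + b (g x)"
    using separating_affine_functions_if_not_tverberg assms(1,3) by blast
  have "{x\<in>S. a (f x) \<bullet> x + b (f x) \<le> 0} \<subseteq> {x\<in>S. g x \<noteq> f x}"
    using pos by force
  then have "card {x\<in>S. a (f x) \<bullet> x + b (f x) \<le> 0} \<le> card {x\<in>S. g x \<noteq> f x}"
    using assms(1) by (intro card_mono) auto
  then have "card {x\<in>S. a (f x) \<bullet> x + b (f x) \<le> 0} \<le> 1"
    using assms(4) by linarith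
  with sums assms(2) show False
    unfolding almost_separated_def by blast
qed

section \<open>Neighbours in the partition graph\<close>

lemma Diff_singleton_nonempty_if_card_ge_2:
  assumes "2 \<le> card A"
  shows "A - {x} \<noteq> {}"
proof
  assume "A - {x} = {}"
  then have "card A \<le> card {x}"
    by (intro card_mono) auto
  with assms show False
    by simp
qed

lemma partition_dist_refl: "partition_dist S P P = 0"
  unfolding partition_dist_def by (rule Least_eq_0) (intro exI[of _ "{}"]; simp)

lemma partition_dist_eq_1E:
  assumes "partition_dist S P P' = 1"
  obtains x where "x \<in> S" and "restrict_partition P (S - {x}) = restrict_partition P' (S - {x})"
proof -
  have "\<exists>k R. R \<subseteq> S \<and> card R = k \<and> restrict_partition P (S - R) = restrict_partition P' (S - R)"
    by (intro exI[of _ "card S"] exI[of _ S]) (auto simp: restrict_partition_def)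
  from LeastI_ex[OF this] assms obtain R where "R \<subseteq> S" and "card R = 1"
    and "restrict_partition P (S - R) = restrict_partition P' (S - R)"
    unfolding partition_dist_def by auto
  with that show ?thesis
    by (metis card_1_singletonE insert_subset)
qed

lemma partition_dist_eq_1I:
  assumes "finite S" and "x \<in> S"
    and "restrict_partition P (S - {x}) = restrict_partition P' (S - {x})"
    and "restrict_partition P S \<noteq> restrict_partition P' S"
  shows "partition_dist S P P' = 1"
  unfolding partition_dist_def
proof (rule Least_equality)
  show "\<exists>R. R \<subseteq> S \<and> card R = 1 \<and> restrict_partition P (S - R) = restrict_partition P' (S - R)"
    using assms(2,3) by (intro exI[of _ "{x}"]) auto
  fix m
  assume "\<exists>R. R \<subseteq> S \<and> card R = m \<and> restrict_partition P (S - R) = restrict_partition P' (S - R)"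
  then obtain R where "R \<subseteq> S" "card R = m" "restrict_partition P (S - R) = restrict_partition P' (S - R)"
    by blast
  with assms(1,4) show "1 \<le> m"
    by (metis Diff_empty card_0_eq finite_subset less_one linorder_not_less)
qed

lemma card_restrict_partition_less_if_singleton_block:
  assumes "is_partition S r P" and "{x} \<in> P"
  shows "card (restrict_partition P (S - {x})) < r"
proof -
  have "finite P" and "card P = r"
    using assms(1) by (auto simp: is_partition_def)
  have "restrict_partition P (S - {x}) \<subseteq> (\<lambda>B. B \<inter> (S - {x})) ` (P - {{x}})"
    unfolding restrict_partition_def by auto
  then have "card (restrict_partition P (S - {x})) \<le> card (P - {{x}})"
    using \<open>finite P\<close> by (meson card_image_le card_mono finite_Diff finite_imageI order_trans)
  also have "\<dots> < card P"
    using \<open>finite P\<close> assms(2) by (rule card_Diff1_less)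
  finally show ?thesis
    using \<open>card P = r\<close> by simp
qed

lemma Diff_singleton_mem_restrict_partition:
  assumes "is_partition S r P" and "B \<in> P" and "B \<noteq> {x}"
  shows "B - {x} \<in> restrict_partition P (S - {x})"
proof -
  have "B \<noteq> {}" and "B \<subseteq> S"
    using assms(1,2) by (auto simp: is_partition_def)
  with assms(3) show ?thesis
    unfolding restrict_partition_def by (intro DiffI rev_image_eqI[OF assms(2)]) auto
qed

lemma label_partition_update_if_restrict_eq:
  assumes P': "is_partition S r P'" and "x \<in> S"
    and ne: "\<forall>j\<in>{1..r}. label_class (S - {x}) f j \<noteq> {}"
    and eq: "restrict_partition P' (S - {x}) = label_partition (S - {x}) r f"
  obtains k where "k \<in> {1..r}" and "P' = label_partition S r (f(x := k))"
proof -
  have disj: "\<forall>B\<in>P'. \<forall>C\<in>P'. B \<noteq> C \<longrightarrow> B \<inter> C = {}" and "card P' = r"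
    using P' unfolding is_partition_def by auto
  have restr: "B - {x} \<in> label_class (S - {x}) f ` {1..r}" if "B \<in> P'" and "B \<noteq> {x}" for B
    using Diff_singleton_mem_restrict_partition[OF P' that] eq label_partition_eq_image[OF ne] by simp
  obtain B' where "B' \<in> P'" and "x \<in> B'"
    using P' \<open>x \<in> S\<close> unfolding is_partition_def by blast
  have "B' \<noteq> {x}"
    using card_restrict_partition_less_if_singleton_block[OF P'] \<open>B' \<in> P'\<close> eq card_label_partition[OF ne]
    by (metis less_irrefl)
  then obtain k where "k \<in> {1..r}" and k: "B' - {x} = label_class (S - {x}) f k"
    using restr[OF \<open>B' \<in> P'\<close>] by blast
  define g where "g = f(x := k)"
  have g_class: "label_class S g j = (if j = k then B' else label_class (S - {x}) f j)" for j
    using k \<open>x \<in> B'\<close> \<open>x \<in> S\<close> by (auto simp: g_def)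
  have g_ne: "\<forall>j\<in>{1..r}. label_class S g j \<noteq> {}"
    using g_class ne \<open>x \<in> B'\<close> by auto
  have "B \<in> label_class S g ` {1..r}" if "B \<in> P'" for B
  proof (cases "B = B'")
    case True
    then have "B = label_class S g k"
      using g_class[of k] by simp
    with \<open>k \<in> {1..r}\<close> show ?thesis
      by (intro rev_image_eqI)
  next
    case False
    then have "x \<notin> B"
      using disj \<open>B \<in> P'\<close> \<open>B' \<in> P'\<close> \<open>x \<in> B'\<close> by blast
    then have "B - {x} \<in> label_class (S - {x}) f ` {1..r}"
      by (intro restr[OF \<open>B \<in> P'\<close>]) auto
    moreover have "B - {x} = B"
      using \<open>x \<notin> B\<close> by simp
    ultimately obtain j where "j \<in> {1..r}" and j: "B = label_class (S - {x}) f j"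
      by auto
    have "j \<noteq> k"
    proof
      assume "j = k"
      then have "B \<subseteq> B'"
        using j k by auto
      with False disj \<open>B \<in> P'\<close> \<open>B' \<in> P'\<close> have "B = {}"
        by blast
      with ne \<open>j \<in> {1..r}\<close> j show False
        by metis
    qed
    with j have "B = label_class S g j"
      using g_class[of j] by simp
    with \<open>j \<in> {1..r}\<close> show ?thesis
      by (intro rev_image_eqI)
  qed
  then have "P' \<subseteq> label_partition S r g"
    unfolding label_partition_eq_image[OF g_ne] by blast
  then have "P' = label_partition S r g"
    using \<open>card P' = r\<close> card_label_partition[OF g_ne]
    by (intro card_subset_eq) (auto simp: label_partition_def)
  with \<open>k \<in> {1..r}\<close> that show ?thesis
    by (simp add: g_def)
qed

lemma partition_dist_label_partition_update:
  assumes "finite S" and f: "\<forall>x\<in>S. f x \<in> {1..r}"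
    and two: "\<forall>j\<in>{1..r}. 2 \<le> card (label_class S f j)"
    and "x \<in> S" and "k \<in> {1..r}" and "k \<noteq> f x"
  shows "partition_dist S (label_partition S r f) (label_partition S r (f(x := k))) = 1"
proof (rule partition_dist_eq_1I[OF \<open>finite S\<close> \<open>x \<in> S\<close>])
  show "restrict_partition (label_partition S r f) (S - {x})
      = restrict_partition (label_partition S r (f(x := k))) (S - {x})"
  proof -
    have "restrict_partition (label_partition S r f) (S - {x}) = label_partition (S - {x}) r f"
      by (rule restrict_label_partition) auto
    also have "\<dots> = label_partition (S - {x}) r (f(x := k))"
      by (rule label_partition_cong) auto
    also have "\<dots> = restrict_partition (label_partition S r (f(x := k))) (S - {x})"
      by (rule restrict_label_partition[symmetric]) auto
    finally show ?thesis .
  qed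
  show "restrict_partition (label_partition S r f) S
      \<noteq> restrict_partition (label_partition S r (f(x := k))) S"
  proof
    assume "restrict_partition (label_partition S r f) S
      = restrict_partition (label_partition S r (f(x := k))) S"
    then have "label_partition S r f = label_partition S r (f(x := k))"
      by (simp add: restrict_label_partition)
    then have "label_class S f (f x) = label_class S (f(x := k)) ((f(x := k)) x)"
      by (rule label_class_eq_if_label_partition_eq) (use f \<open>x \<in> S\<close> \<open>k \<in> {1..r}\<close> in auto)
    then have classes: "label_class S f (f x) = label_class S (f(x := k)) k"
      by (simp only: fun_upd_same)
    have "label_class S f k - {x} \<noteq> {}"
      by (intro Diff_singleton_nonempty_if_card_ge_2) (use two \<open>k \<in> {1..r}\<close> in blast)
    then obtain w where "w \<in> label_class S f k - {x}"
      by blast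
    then have "w \<in> label_class S (f(x := k)) k"
      by simp
    then have "w \<in> label_class S f (f x)"
      by (simp only: classes)
    with \<open>w \<in> label_class S f k - {x}\<close> \<open>k \<noteq> f x\<close> show False
      by simp
  qed
qed

lemma label_partition_update_inject:
  assumes f: "\<forall>x\<in>S. f x \<in> {1..r}" and two: "\<forall>j\<in>{1..r}. 2 \<le> card (label_class S f j)"
    and "x \<in> S" "k \<in> {1..r}" "k \<noteq> f x" "l \<in> {1..r}"
    and eq: "label_partition S r (f(x := k)) = label_partition S r (f(y := l))"
  shows "x = y \<and> k = l"
proof -
  have "label_class S (f(x := k)) ((f(x := k)) x) = label_class S (f(y := l)) ((f(y := l)) x)"
    using f \<open>x \<in> S\<close> \<open>k \<in> {1..r}\<close> \<open>l \<in> {1..r}\<close>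
    by (intro label_class_eq_if_label_partition_eq[OF eq]) auto
  then have classes: "label_class S (f(x := k)) k = label_class S (f(y := l)) ((f(y := l)) x)"
    by (simp only: fun_upd_same)
  have "label_class S f k - {y} \<noteq> {}"
    by (intro Diff_singleton_nonempty_if_card_ge_2) (use two \<open>k \<in> {1..r}\<close> in blast)
  then obtain w where w: "w \<in> label_class S f k - {y}"
    by blast
  with \<open>k \<noteq> f x\<close> have "w \<in> label_class S (f(x := k)) k"
    by auto
  then have "w \<in> label_class S (f(y := l)) ((f(y := l)) x)"
    by (simp only: classes)
  with w have "(f(y := l)) x = k"
    by simp
  with \<open>k \<noteq> f x\<close> show "x = y \<and> k = l"
    by (auto split: if_splits)
qed

lemma inj_on_label_partition_update:
  assumes f: "\<forall>x\<in>S. f x \<in> {1..r}" and two: "\<forall>j\<in>{1..r}. 2 \<le> card (label_class S f j)"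
  shows "inj_on (\<lambda>(x, k). label_partition S r (f(x := k))) (SIGMA x:S. {1..r} - {f x})"
proof (rule inj_onI)
  fix p q
  assume p: "p \<in> (SIGMA x:S. {1..r} - {f x})" and q: "q \<in> (SIGMA x:S. {1..r} - {f x})"
    and pq: "(\<lambda>(x, k). label_partition S r (f(x := k))) p = (\<lambda>(x, k). label_partition S r (f(x := k))) q"
  obtain x k y l where "p = (x, k)" and "q = (y, l)"
    by (cases p, cases q)
  with p q pq have "x \<in> S" "k \<in> {1..r}" "k \<noteq> f x" "l \<in> {1..r}"
    and "label_partition S r (f(x := k)) = label_partition S r (f(y := l))"
    by simp_all
  then have "x = y \<and> k = l"
    by (rule label_partition_update_inject[OF f two])
  with \<open>p = (x, k)\<close> \<open>q = (y, l)\<close> show "p = q"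
    by simp
qed

lemma label_partition_update_if_partition_dist_eq_1:
  assumes f: "\<forall>x\<in>S. f x \<in> {1..r}" and two: "\<forall>j\<in>{1..r}. 2 \<le> card (label_class S f j)"
    and P': "is_partition S r P'" and dist: "partition_dist S (label_partition S r f) P' = 1"
  obtains x k where "x \<in> S" and "k \<in> {1..r}" and "k \<noteq> f x"
    and "P' = label_partition S r (f(x := k))"
proof -
  obtain x where "x \<in> S"
    and eq: "restrict_partition (label_partition S r f) (S - {x}) = restrict_partition P' (S - {x})"
    using partition_dist_eq_1E[OF dist] .
  have "label_class (S - {x}) f j \<noteq> {}" if "j \<in> {1..r}" for j
  proof -
    have "label_class S f j - {x} \<noteq> {}"
      by (intro Diff_singleton_nonempty_if_card_ge_2) (use two that in blast)
    then show ?thesis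
      by auto
  qed
  then have "\<forall>j\<in>{1..r}. label_class (S - {x}) f j \<noteq> {}"
    by blast
  moreover have "restrict_partition P' (S - {x}) = label_partition (S - {x}) r f"
    using eq by (simp add: restrict_label_partition)
  ultimately obtain k where "k \<in> {1..r}" and k: "P' = label_partition S r (f(x := k))"
    using label_partition_update_if_restrict_eq[OF P' \<open>x \<in> S\<close>] by blast
  moreover have "k \<noteq> f x"
    using k dist partition_dist_refl[of S "label_partition S r f"] by auto
  ultimately show ?thesis
    using that \<open>x \<in> S\<close> by blast
qed

lemma tverberg_degree_label_partition:
  assumes "finite S" and f: "\<forall>x\<in>S. f x \<in> {1..r}"
    and two: "\<forall>j\<in>{1..r}. 2 \<le> card (label_class S f j)"
    and tverberg: "\<And>x k. x \<in> S \<Longrightarrow> k \<in> {1..r} \<Longrightarrow>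
      tverberg_partition S r (label_partition S r (f(x := k)))"
  shows "tverberg_degree S r (label_partition S r f) = card S * (r - 1)"
proof -
  let ?N = "SIGMA x:S. {1..r} - {f x}"
  let ?update = "\<lambda>(x, k). label_partition S r (f(x := k))"
  have "{P'. tverberg_partition S r P' \<and> partition_dist S (label_partition S r f) P' = 1}
      = ?update ` ?N"
  proof (intro set_eqI iffI)
    fix P'
    assume "P' \<in> {P'. tverberg_partition S r P' \<and> partition_dist S (label_partition S r f) P' = 1}"
    then obtain x k where "x \<in> S" "k \<in> {1..r}" "k \<noteq> f x" "P' = label_partition S r (f(x := k))"
      using label_partition_update_if_partition_dist_eq_1[OF f two]
      by (auto simp: tverberg_partition_def)
    then show "P' \<in> ?update ` ?N"
      by (intro rev_image_eqI[of "(x, k)"]) auto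
  next
    fix P'
    assume "P' \<in> ?update ` ?N"
    then show "P' \<in> {P'. tverberg_partition S r P' \<and> partition_dist S (label_partition S r f) P' = 1}"
      using tverberg partition_dist_label_partition_update[OF \<open>finite S\<close> f two] by auto
  qed
  then have "tverberg_degree S r (label_partition S r f) = card ?N"
    unfolding tverberg_degree_def using inj_on_label_partition_update[OF f two] by (simp add: card_image)
  also have "\<dots> = (\<Sum>x\<in>S. card ({1..r} - {f x}))"
    using \<open>finite S\<close> by simp
  also have "\<dots> = card S * (r - 1)"
    using f by simp
  finally show ?thesis .
qed

lemma tverberg_and_degree_if_not_almost_separated:
  fixes S :: "'a::euclidean_space set"
  assumes "finite S" and f: "\<forall>x\<in>S. f x \<in> {1..r}" and "\<not> almost_separated S r f"
  shows "tverberg_partition S r (label_partition S r f)"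
    and "tverberg_degree S r (label_partition S r f) = card S * (r - 1)"
proof -
  have modified: "tverberg_partition S r (label_partition S r (f(x := k)))"
    if "x \<in> S" and "k \<in> {1..r}" for x k
  proof (rule tverberg_partition_if_not_almost_separated[OF assms(1,3)])
    show "\<forall>y\<in>S. (f(x := k)) y \<in> {1..r}"
      using f that by simp
    have "{y\<in>S. (f(x := k)) y \<noteq> f y} \<subseteq> {x}"
      by auto
    then show "card {y\<in>S. (f(x := k)) y \<noteq> f y} \<le> 1"
      using card_mono[of "{x}"] by fastforce
  qed
  show "tverberg_partition S r (label_partition S r f)"
    using modified[of x "f x"] f \<open>finite S\<close> tverberg_partition_if_not_almost_separated[OF assms(1,3) f]
    by simp
  show "tverberg_degree S r (label_partition S r f) = card S * (r - 1)"
    using assms(1) f two_le_card_label_class_if_not_almost_separated[OF assms(3)] modified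
    by (intro tverberg_degree_label_partition) auto
qed

section \<open>Shattering and halfspace traces\<close>

definition shatters :: "'a set set \<Rightarrow> 'a set \<Rightarrow> bool" where
  "shatters F A \<longleftrightarrow> (\<forall>C\<subseteq>A. \<exists>B\<in>F. C = B \<inter> A)"

lemma shatters_image_Diff_singleton:
  assumes "x \<notin> A"
  shows "shatters ((\<lambda>B. B - {x}) ` F) A \<longleftrightarrow> shatters F A"
proof -
  have "(B - {x}) \<inter> A = B \<inter> A" for B
    using assms by blast
  then show ?thesis
    unfolding shatters_def by simp
qed

lemma shatters_insert_if_shatters_pairs:
  assumes "x \<notin> A" and "shatters {B\<in>F. x \<notin> B \<and> insert x B \<in> F} A"
  shows "shatters F (insert x A)"
  unfolding shatters_def
proof (intro allI impI)
  fix C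
  assume "C \<subseteq> insert x A"
  then have "C - {x} \<subseteq> A"
    by blast
  then obtain B where "B \<in> F" "x \<notin> B" "insert x B \<in> F" and B: "C - {x} = B \<inter> A"
    using assms(2) unfolding shatters_def by blast
  show "\<exists>B\<in>F. C = B \<inter> insert x A"
  proof (cases "x \<in> C")
    case True
    then have "C = insert x B \<inter> insert x A"
      using B by blast
    with \<open>insert x B \<in> F\<close> show ?thesis ..
  next
    case False
    then have "C = B \<inter> insert x A"
      using B \<open>x \<notin> B\<close> by blast
    with \<open>B \<in> F\<close> show ?thesis ..
  qed
qed

lemma card_image_Diff_singleton_plus_pairs:
  assumes "finite F"
  shows "card ((\<lambda>B. B - {x}) ` F) + card {B\<in>F. x \<notin> B \<and> insert x B \<in> F} = card F"
proof -
  define Fout where "Fout = {B\<in>F. x \<notin> B}"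
  define Fin where "Fin = {B\<in>F. x \<in> B}"
  have "finite Fout" "finite Fin"
    using assms by (simp_all add: Fout_def Fin_def)
  have F: "F = Fout \<union> Fin" "Fout \<inter> Fin = {}"
    unfolding Fout_def Fin_def by blast+
  have "inj_on (\<lambda>B. B - {x}) Fin"
    unfolding Fin_def by (rule inj_onI) (metis insert_Diff mem_Collect_eq)
  then have "card ((\<lambda>B. B - {x}) ` Fin) = card Fin"
    by (rule card_image)
  moreover have "(\<lambda>B. B - {x}) ` Fout = Fout"
    unfolding Fout_def by force
  then have "(\<lambda>B. B - {x}) ` F = Fout \<union> (\<lambda>B. B - {x}) ` Fin"
    using F(1) by (metis image_Un)
  moreover have "{B\<in>F. x \<notin> B \<and> insert x B \<in> F} = Fout \<inter> (\<lambda>B. B - {x}) ` Fin"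
  proof (intro set_eqI iffI)
    fix B
    assume "B \<in> {B\<in>F. x \<notin> B \<and> insert x B \<in> F}"
    then have "B \<in> Fout" "insert x B \<in> Fin" "B = insert x B - {x}"
      unfolding Fout_def Fin_def by auto
    then show "B \<in> Fout \<inter> (\<lambda>B. B - {x}) ` Fin"
      by blast
  next
    fix B
    assume "B \<in> Fout \<inter> (\<lambda>B. B - {x}) ` Fin"
    then obtain C where "B \<in> Fout" "C \<in> Fin" "B = C - {x}"
      by blast
    then have "insert x B = C"
      unfolding Fin_def by auto
    with \<open>B \<in> Fout\<close> \<open>C \<in> Fin\<close> show "B \<in> {B\<in>F. x \<notin> B \<and> insert x B \<in> F}"
      unfolding Fout_def Fin_def by simp
  qed
  moreover have "card F = card Fout + card Fin"
    using F \<open>finite Fout\<close> \<open>finite Fin\<close> by (simp add: card_Un_disjoint)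
  ultimately show ?thesis
    using card_Un_Int[of Fout "(\<lambda>B. B - {x}) ` Fin"] \<open>finite Fout\<close> \<open>finite Fin\<close> by simp
qed

lemma card_shattered_insert_ge:
  assumes "finite G" and "x \<notin> G"
  shows "card {A. A \<subseteq> G \<and> shatters ((\<lambda>B. B - {x}) ` F) A}
      + card {A. A \<subseteq> G \<and> shatters {B\<in>F. x \<notin> B \<and> insert x B \<in> F} A}
    \<le> card {A. A \<subseteq> insert x G \<and> shatters F A}"
proof -
  let ?sh_diff = "{A. A \<subseteq> G \<and> shatters ((\<lambda>B. B - {x}) ` F) A}"
  let ?sh_pairs = "{A. A \<subseteq> G \<and> shatters {B\<in>F. x \<notin> B \<and> insert x B \<in> F} A}"
  let ?sh_all = "{A. A \<subseteq> insert x G \<and> shatters F A}"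
  have sub_diff: "?sh_diff \<subseteq> ?sh_all"
    using assms(2) shatters_image_Diff_singleton[of x _ F] by auto
  have sub_pairs: "insert x ` ?sh_pairs \<subseteq> ?sh_all"
    using assms(2) shatters_insert_if_shatters_pairs[of x _ F] by auto
  have "x \<notin> A" if "A \<in> ?sh_diff" for A
    using that assms(2) by auto
  then have disjoint: "?sh_diff \<inter> insert x ` ?sh_pairs = {}"
    by auto
  have "inj_on (insert x) ?sh_pairs"
    using assms(2) by (intro inj_onI) (auto simp: insert_ident)
  have fin: "finite ?sh_all"
    using assms(1) by simp
  have "card ?sh_diff + card ?sh_pairs = card (?sh_diff \<union> insert x ` ?sh_pairs)"
    using card_Un_disjoint[OF finite_subset[OF sub_diff fin] finite_subset[OF sub_pairs fin] disjoint]
      card_image[OF \<open>inj_on (insert x) ?sh_pairs\<close>] by simp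
  also have "\<dots> \<le> card ?sh_all"
    using sub_diff sub_pairs fin by (intro card_mono) auto
  finally show ?thesis .
qed

lemma card_le_card_shattered:
  assumes "finite G" and "F \<subseteq> Pow G"
  shows "card F \<le> card {A. A \<subseteq> G \<and> shatters F A}"
  using assms
proof (induction G arbitrary: F rule: finite_induct)
  case empty
  show ?case
  proof (cases "F = {}")
    case False
    then have "{A. A \<subseteq> {} \<and> shatters F A} = {{}}"
      by (auto simp: shatters_def)
    moreover have "F \<subseteq> {{}}"
      using empty by auto
    ultimately show ?thesis
      using card_mono[of "{{}}" F] by simp
  qed simp
next
  case (insert x G)
  let ?F_diff = "(\<lambda>B. B - {x}) ` F"
  let ?F_pairs = "{B\<in>F. x \<notin> B \<and> insert x B \<in> F}"
  have "finite F"
    using insert.prems insert.hyps(1) by (meson finite_Pow_iff finite_insert finite_subset)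
  have "?F_diff \<subseteq> Pow G" "?F_pairs \<subseteq> Pow G"
    using insert.prems insert.hyps(2) by auto
  have "card F = card ?F_diff + card ?F_pairs"
    using card_image_Diff_singleton_plus_pairs[OF \<open>finite F\<close>, of x] by simp
  also have "\<dots> \<le> card {A. A \<subseteq> G \<and> shatters ?F_diff A} + card {A. A \<subseteq> G \<and> shatters ?F_pairs A}"
    using insert.IH[OF \<open>?F_diff \<subseteq> Pow G\<close>] insert.IH[OF \<open>?F_pairs \<subseteq> Pow G\<close>] by (rule add_mono)
  also have "\<dots> \<le> card {A. A \<subseteq> insert x G \<and> shatters F A}"
    by (rule card_shattered_insert_ge[OF insert.hyps(1,2)])
  finally show ?case .
qed

lemma card_subsets_card_le:
  assumes "finite S"
  shows "card {A. A \<subseteq> S \<and> card A \<le> m} \<le> (card S + 1) ^ m"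
proof -
  have "{A. A \<subseteq> S \<and> card A \<le> m} = (\<Union>k\<le>m. {A. A \<subseteq> S \<and> card A = k})"
    by auto
  then have "card {A. A \<subseteq> S \<and> card A \<le> m} \<le> (\<Sum>k\<le>m. card {A. A \<subseteq> S \<and> card A = k})"
    by (simp add: card_UN_le)
  also have "\<dots> = (\<Sum>k\<le>m. card S choose k)"
    using n_subsets[OF assms] by simp
  also have "\<dots> \<le> (\<Sum>k\<le>m. (m choose k) * card S ^ k)"
  proof (rule sum_mono)
    fix k
    assume "k \<in> {..m}"
    then have "1 \<le> m choose k"
      by (simp add: Suc_leI)
    moreover have "card S choose k \<le> card S ^ k"
      by (cases "k \<le> card S") (auto simp: binomial_le_pow binomial_eq_0)
    ultimately show "card S choose k \<le> (m choose k) * card S ^ k"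
      using mult_le_mono by fastforce
  qed
  also have "\<dots> = (card S + 1) ^ m"
    using binomial_ring[of "card S" 1 m] by simp
  finally show ?thesis .
qed

definition halfspace_traces :: "'a::euclidean_space set \<Rightarrow> 'a set set" where
  "halfspace_traces S = {T. \<exists>a b. T = {x\<in>S. 0 < a \<bullet> x + b}}"

lemma halfspace_traces_subset_Pow: "halfspace_traces S \<subseteq> Pow S"
  unfolding halfspace_traces_def by auto

lemma card_le_if_shatters_halfspace_traces:
  fixes S :: "'a::euclidean_space set"
  assumes "finite A" and "A \<subseteq> S" and "shatters (halfspace_traces S) A"
  shows "card A \<le> DIM('a) + 1"
proof (rule ccontr)
  assume "\<not> card A \<le> DIM('a) + 1"
  then have "affine_dependent A"
    using affine_dependent_biggerset[OF \<open>finite A\<close>] by simp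
  then obtain M P where "M \<inter> P = {}" "M \<union> P = A" and "convex hull M \<inter> convex hull P \<noteq> {}"
    using Radon_partition[OF \<open>finite A\<close>] by blast
  moreover obtain a b where M: "M = {x\<in>S. 0 < a \<bullet> x + b} \<inter> A"
    using assms(3) \<open>M \<union> P = A\<close> unfolding shatters_def halfspace_traces_def by blast
  have "convex hull M \<subseteq> {x. - b < a \<bullet> x}"
    using M by (intro hull_minimal) (auto simp: convex_halfspace_gt)
  moreover have "P \<subseteq> {x. a \<bullet> x \<le> - b}"
  proof
    fix x
    assume "x \<in> P"
    then have "x \<in> A" "x \<notin> M"
      using \<open>M \<inter> P = {}\<close> \<open>M \<union> P = A\<close> by auto
    then show "x \<in> {x. a \<bullet> x \<le> - b}"
      using M assms(2) by auto
  qed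
  then have "convex hull P \<subseteq> {x. a \<bullet> x \<le> - b}"
    by (intro hull_minimal) (auto simp: convex_halfspace_le)
  ultimately show False
    by fastforce
qed

lemma card_halfspace_traces:
  fixes S :: "'a::euclidean_space set"
  assumes "finite S"
  shows "card (halfspace_traces S) \<le> (card S + 1) ^ (DIM('a) + 1)"
proof -
  have "card (halfspace_traces S) \<le> card {A. A \<subseteq> S \<and> shatters (halfspace_traces S) A}"
    by (rule card_le_card_shattered[OF assms halfspace_traces_subset_Pow])
  also have "\<dots> \<le> card {A. A \<subseteq> S \<and> card A \<le> DIM('a) + 1}"
    using assms card_le_if_shatters_halfspace_traces[of _ S]
    by (intro card_mono) (auto intro: finite_subset)
  also have "\<dots> \<le> (card S + 1) ^ (DIM('a) + 1)"
    by (rule card_subsets_card_le[OF assms])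
  finally show ?thesis .
qed

section \<open>Counting almost separated labellings\<close>

lemma at_most_one_exception_subset_PiE:
  assumes "finite S"
  shows "{f \<in> S \<rightarrow>\<^sub>E U. card {x\<in>S. f x \<notin> A x} \<le> 1}
    \<subseteq> Pi\<^sub>E S A \<union> (\<Union>y\<in>S. Pi\<^sub>E S (A(y := U - A y)))"
proof (intro subsetI, elim CollectE conjE)
  fix f
  assume f: "f \<in> S \<rightarrow>\<^sub>E U" and le1: "card {x\<in>S. f x \<notin> A x} \<le> 1"
  show "f \<in> Pi\<^sub>E S A \<union> (\<Union>y\<in>S. Pi\<^sub>E S (A(y := U - A y)))"
  proof (cases "{x\<in>S. f x \<notin> A x} = {}")
    case True
    then have "f \<in> Pi\<^sub>E S A"
      using f by (auto simp: PiE_iff)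
    then show ?thesis ..
  next
    case False
    with le1 assms have "card {x\<in>S. f x \<notin> A x} = 1"
      by (simp add: card_gt_0_iff le_antisym Suc_leI)
    then obtain y where y: "{x\<in>S. f x \<notin> A x} = {y}"
      by (rule card_1_singletonE)
    then have "y \<in> {x\<in>S. f x \<notin> A x}"
      by simp
    have "f x \<in> (A(y := U - A y)) x" if "x \<in> S" for x
    proof (cases "x = y")
      case True
      then show ?thesis
        using \<open>y \<in> {x\<in>S. f x \<notin> A x}\<close> f by (auto simp: PiE_iff)
    next
      case False
      then have "x \<notin> {x\<in>S. f x \<notin> A x}"
        using y by simp
      with that False show ?thesis
        by simp
    qed
    then have "f \<in> Pi\<^sub>E S (A(y := U - A y))"
      using f by (simp add: PiE_iff)
    with \<open>y \<in> {x\<in>S. f x \<notin> A x}\<close> show ?thesis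
      by blast
  qed
qed

lemma card_PiE_at_most_one_exception_eq:
  assumes "finite S" and "card U = Suc m" and A: "\<forall>x\<in>S. A x \<subseteq> U \<and> card (A x) = m"
  shows "card {f \<in> S \<rightarrow>\<^sub>E U. card {x\<in>S. f x \<notin> A x} \<le> 1} \<le> m ^ card S + card S * m ^ (card S - 1)"
proof -
  define E where "E y = Pi\<^sub>E S (A(y := U - A y))" for y
  have "finite U"
    using assms(2) card.infinite by fastforce
  have finA: "finite (A x)" if "x \<in> S" for x
    using A that \<open>finite U\<close> finite_subset by blast
  have "finite (Pi\<^sub>E S A \<union> (\<Union>y\<in>S. E y))"
    using \<open>finite S\<close> \<open>finite U\<close> finA by (auto simp: E_def intro!: finite_PiE)
  then have "card {f \<in> S \<rightarrow>\<^sub>E U. card {x\<in>S. f x \<notin> A x} \<le> 1}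
      \<le> card (Pi\<^sub>E S A) + card (\<Union>y\<in>S. E y)"
    using at_most_one_exception_subset_PiE[OF assms(1), of U A] unfolding E_def
    by (meson card_Un_le card_mono order_trans)
  moreover have "card (Pi\<^sub>E S A) = m ^ card S"
    using A \<open>finite S\<close> by (simp add: card_PiE)
  moreover have "card (E y) = m ^ (card S - 1)" if "y \<in> S" for y
  proof -
    have "card (U - A y) = 1"
      using A that assms(2) finA[OF that] by (simp add: card_Diff_subset)
    moreover have "(\<Prod>x\<in>S - {y}. card ((A(y := U - A y)) x)) = m ^ (card S - 1)"
      using A \<open>finite S\<close> that by (simp add: card_Diff_singleton_if)
    ultimately show ?thesis
      unfolding E_def using \<open>finite S\<close> that by (simp add: card_PiE prod.remove)
  qed
  then have "card (\<Union>y\<in>S. E y) \<le> card S * m ^ (card S - 1)"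
    using card_UN_le[OF \<open>finite S\<close>, of E] by simp
  ultimately show ?thesis
    by linarith
qed

lemma card_PiE_at_most_one_exception:
  assumes "finite S" and "card U = Suc m" and A: "\<forall>x\<in>S. A x \<subseteq> U \<and> card (A x) \<le> m"
  shows "card {f \<in> S \<rightarrow>\<^sub>E U. card {x\<in>S. f x \<notin> A x} \<le> 1} \<le> m ^ card S + card S * m ^ (card S - 1)"
proof -
  have "finite U"
    using assms(2) card.infinite by fastforce
  have "\<exists>B. A x \<subseteq> B \<and> B \<subseteq> U \<and> card B = m" if "x \<in> S" for x
    using A that assms(2) \<open>finite U\<close> by (intro exists_subset_between) auto
  then obtain A' where A': "\<forall>x\<in>S. A x \<subseteq> A' x \<and> A' x \<subseteq> U \<and> card (A' x) = m"
    by metis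
  have "{f \<in> S \<rightarrow>\<^sub>E U. card {x\<in>S. f x \<notin> A x} \<le> 1} \<subseteq> {f \<in> S \<rightarrow>\<^sub>E U. card {x\<in>S. f x \<notin> A' x} \<le> 1}"
  proof (intro subsetI, elim CollectE conjE, intro CollectI conjI)
    fix f
    assume "card {x\<in>S. f x \<notin> A x} \<le> 1"
    moreover have "card {x\<in>S. f x \<notin> A' x} \<le> card {x\<in>S. f x \<notin> A x}"
      using A' \<open>finite S\<close> by (intro card_mono) auto
    ultimately show "card {x\<in>S. f x \<notin> A' x} \<le> 1"
      by linarith
  qed
  moreover have "finite (S \<rightarrow>\<^sub>E U)"
    using \<open>finite S\<close> \<open>finite U\<close> by (simp add: finite_PiE)
  ultimately have "card {f \<in> S \<rightarrow>\<^sub>E U. card {x\<in>S. f x \<notin> A x} \<le> 1}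
      \<le> card {f \<in> S \<rightarrow>\<^sub>E U. card {x\<in>S. f x \<notin> A' x} \<le> 1}"
    by (intro card_mono) auto
  also have "\<dots> \<le> m ^ card S + card S * m ^ (card S - 1)"
    using card_PiE_at_most_one_exception_eq[OF assms(1,2)] A' by blast
  finally show ?thesis .
qed

text \<open>Label \<open>r\<close> needs no trace of its own: \<open>h\<^sub>r = - (h\<^sub>1 + ... + h\<^bsub>r-1\<^esub>)\<close> is positive
  only where some \<open>h\<^sub>j\<close> with \<open>j < r\<close> is not.\<close>

definition allowed_labels :: "nat \<Rightarrow> (nat \<Rightarrow> 'a set) \<Rightarrow> 'a \<Rightarrow> nat set" where
  "allowed_labels r \<tau> x =
     {j\<in>{1..r-1}. x \<in> \<tau> j} \<union> (if \<forall>j\<in>{1..r-1}. x \<in> \<tau> j then {} else {r})"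

lemma allowed_labels_subset: "allowed_labels r \<tau> x \<subseteq> {1..r}"
  unfolding allowed_labels_def by auto

lemma card_allowed_labels: "card (allowed_labels r \<tau> x) \<le> r - 1"
proof (cases "\<forall>j\<in>{1..r-1}. x \<in> \<tau> j")
  case True
  then have "allowed_labels r \<tau> x = {1..r-1}"
    by (auto simp: allowed_labels_def)
  then show ?thesis
    by simp
next
  case False
  then obtain i where "i \<in> {1..r-1}" and "x \<notin> \<tau> i"
    by blast
  then have "card {j\<in>{1..r-1}. x \<in> \<tau> j} \<le> card ({1..r-1} - {i})"
    by (intro card_mono) auto
  also have "\<dots> = r - 2"
    using \<open>i \<in> {1..r-1}\<close> by simp
  finally have "card {j\<in>{1..r-1}. x \<in> \<tau> j} \<le> r - 2" .
  moreover have "card (allowed_labels r \<tau> x) \<le> Suc (card {j\<in>{1..r-1}. x \<in> \<tau> j})"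
    using False by (simp add: allowed_labels_def card_insert_if)
  moreover have "r \<ge> 2"
    using \<open>i \<in> {1..r-1}\<close> by auto
  ultimately show ?thesis
    by linarith
qed

lemma mem_allowed_labels:
  assumes "(\<Sum>j\<in>{1..r}. h j) = (0::real)" and "i \<in> {1..r}" and "0 < h i"
    and "\<forall>j\<in>{1..r-1}. x \<in> \<tau> j \<longleftrightarrow> 0 < h j"
  shows "i \<in> allowed_labels r \<tau> x"
proof (cases "i = r")
  case True
  have "{1..r} = insert r {1..r-1}"
    using assms(2) by auto
  moreover have "r \<notin> {1..r-1}"
    using assms(2) by auto
  ultimately have "h r + (\<Sum>j\<in>{1..r-1}. h j) = 0"
    using assms(1) by simp
  have "\<not> (\<forall>j\<in>{1..r-1}. 0 < h j)"
  proof
    assume "\<forall>j\<in>{1..r-1}. 0 < h j"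
    then have "0 \<le> (\<Sum>j\<in>{1..r-1}. h j)"
      by (intro sum_nonneg) (simp add: less_imp_le)
    with \<open>h r + (\<Sum>j\<in>{1..r-1}. h j) = 0\<close> True assms(3) show False
      by simp
  qed
  with assms(4) have "\<not> (\<forall>j\<in>{1..r-1}. x \<in> \<tau> j)"
    by simp
  with True show ?thesis
    unfolding allowed_labels_def if_not_P[OF \<open>\<not> (\<forall>j\<in>{1..r-1}. x \<in> \<tau> j)\<close>] by simp
next
  case False
  with assms(2) have "i \<in> {1..r-1}"
    by auto
  moreover from this assms(3,4) have "x \<in> \<tau> i"
    by simp
  ultimately show ?thesis
    unfolding allowed_labels_def by blast
qed

lemma almost_separated_subset_allowed_labels:
  fixes S :: "'a::euclidean_space set"
  assumes "finite S"
  shows "{f \<in> S \<rightarrow>\<^sub>E {1..r}. almost_separated S r f}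
    \<subseteq> (\<Union>\<tau>\<in>{1..r-1} \<rightarrow>\<^sub>E halfspace_traces S.
          {f \<in> S \<rightarrow>\<^sub>E {1..r}. card {x\<in>S. f x \<notin> allowed_labels r \<tau> x} \<le> 1})"
proof (intro subsetI, elim CollectE conjE)
  fix f
  assume f: "f \<in> S \<rightarrow>\<^sub>E {1..r}" and "almost_separated S r f"
  then obtain a b where "(\<Sum>j\<in>{1..r}. a j) = 0" and "(\<Sum>j\<in>{1..r}. b j) = (0::real)"
    and le1: "card {x\<in>S. a (f x) \<bullet> x + b (f x) \<le> 0} \<le> 1"
    unfolding almost_separated_def by blast
  define \<tau> where "\<tau> = restrict (\<lambda>j. {x\<in>S. 0 < a j \<bullet> x + b j}) {1..r-1}"
  have "\<tau> \<in> {1..r-1} \<rightarrow>\<^sub>E halfspace_traces S"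
    unfolding \<tau>_def halfspace_traces_def by auto
  have "(\<Sum>j\<in>{1..r}. a j \<bullet> x + b j) = 0" for x
    using \<open>(\<Sum>j\<in>{1..r}. a j) = 0\<close> \<open>(\<Sum>j\<in>{1..r}. b j) = 0\<close>
    by (simp add: sum.distrib inner_sum_left[symmetric])
  then have allowed: "f x \<in> allowed_labels r \<tau> x" if "x \<in> S" and "0 < a (f x) \<bullet> x + b (f x)" for x
    using f that by (intro mem_allowed_labels) (auto simp: \<tau>_def)
  have "{x\<in>S. f x \<notin> allowed_labels r \<tau> x} \<subseteq> {x\<in>S. a (f x) \<bullet> x + b (f x) \<le> 0}"
  proof
    fix x
    assume x: "x \<in> {x\<in>S. f x \<notin> allowed_labels r \<tau> x}"
    then have "\<not> 0 < a (f x) \<bullet> x + b (f x)"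
      using allowed[of x] by auto
    with x show "x \<in> {x\<in>S. a (f x) \<bullet> x + b (f x) \<le> 0}"
      by simp
  qed
  then have "card {x\<in>S. f x \<notin> allowed_labels r \<tau> x} \<le> card {x\<in>S. a (f x) \<bullet> x + b (f x) \<le> 0}"
    using assms by (intro card_mono) auto
  with le1 have "card {x\<in>S. f x \<notin> allowed_labels r \<tau> x} \<le> 1"
    by linarith
  with f \<open>\<tau> \<in> {1..r-1} \<rightarrow>\<^sub>E halfspace_traces S\<close>
  show "f \<in> (\<Union>\<tau>\<in>{1..r-1} \<rightarrow>\<^sub>E halfspace_traces S.
      {f \<in> S \<rightarrow>\<^sub>E {1..r}. card {x\<in>S. f x \<notin> allowed_labels r \<tau> x} \<le> 1})"
    by blast
qed

lemma card_almost_separated_labellings: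
  fixes S :: "'a::euclidean_space set"
  assumes "finite S" and "r > 0"
  shows "card {f \<in> S \<rightarrow>\<^sub>E {1..r}. almost_separated S r f}
    \<le> card (halfspace_traces S) ^ (r - 1) * ((r - 1) ^ card S + card S * (r - 1) ^ (card S - 1))"
proof -
  let ?T = "{1..r-1} \<rightarrow>\<^sub>E halfspace_traces S"
  let ?near = "\<lambda>\<tau>. {f \<in> S \<rightarrow>\<^sub>E {1..r}. card {x\<in>S. f x \<notin> allowed_labels r \<tau> x} \<le> 1}"
  have "finite (halfspace_traces S)"
    using assms(1) halfspace_traces_subset_Pow by (metis finite_Pow_iff finite_subset)
  then have "finite ?T"
    by (simp add: finite_PiE)
  have "finite (S \<rightarrow>\<^sub>E {1..r})"
    using assms(1) by (simp add: finite_PiE)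
  then have "card {f \<in> S \<rightarrow>\<^sub>E {1..r}. almost_separated S r f} \<le> card (\<Union>\<tau>\<in>?T. ?near \<tau>)"
    using almost_separated_subset_allowed_labels[OF assms(1)]
    by (intro card_mono) (auto intro: finite_subset)
  also have "\<dots> \<le> (\<Sum>\<tau>\<in>?T. card (?near \<tau>))"
    by (rule card_UN_le[OF \<open>finite ?T\<close>])
  also have "\<dots> \<le> (\<Sum>\<tau>\<in>?T. (r - 1) ^ card S + card S * (r - 1) ^ (card S - 1))"
  proof (rule sum_mono)
    fix \<tau>
    have "card {1..r} = Suc (r - 1)"
      using assms(2) by simp
    moreover have "\<forall>x\<in>S. allowed_labels r \<tau> x \<subseteq> {1..r} \<and> card (allowed_labels r \<tau> x) \<le> r - 1"
      by (intro ballI conjI allowed_labels_subset card_allowed_labels)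
    ultimately show "card (?near \<tau>) \<le> (r - 1) ^ card S + card S * (r - 1) ^ (card S - 1)"
      by (rule card_PiE_at_most_one_exception[OF assms(1)])
  qed
  also have "\<dots> = card (halfspace_traces S) ^ (r - 1) * ((r - 1) ^ card S + card S * (r - 1) ^ (card S - 1))"
    by (simp add: card_PiE)
  finally show ?thesis .
qed

lemma card_tverberg_labellings_ge:
  fixes S :: "'a::euclidean_space set"
  assumes "finite S"
  shows "real r ^ card S - real (card {f \<in> S \<rightarrow>\<^sub>E {1..r}. almost_separated S r f})
    \<le> real (card {f \<in> S \<rightarrow>\<^sub>E {1..r}. tverberg_partition S r (label_partition S r f) \<and>
          tverberg_degree S r (label_partition S r f) = card S * (r - 1)})"
proof -
  let ?F = "S \<rightarrow>\<^sub>E {1..r}"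
  let ?Sep = "{f \<in> ?F. almost_separated S r f}"
  let ?Good = "{f \<in> ?F. tverberg_partition S r (label_partition S r f) \<and>
    tverberg_degree S r (label_partition S r f) = card S * (r - 1)}"
  have "finite ?F" and "card ?F = r ^ card S"
    using assms by (simp_all add: finite_PiE card_PiE)
  have "?F - ?Sep \<subseteq> ?Good"
    using tverberg_and_degree_if_not_almost_separated[OF assms] by (auto simp: PiE_iff)
  then have "card (?F - ?Sep) \<le> card ?Good"
    using \<open>finite ?F\<close> by (intro card_mono) auto
  moreover have "card (?F - ?Sep) = r ^ card S - card ?Sep"
    using \<open>finite ?F\<close> \<open>card ?F = r ^ card S\<close> by (simp add: card_Diff_subset finite_subset)
  moreover have "card ?Sep \<le> r ^ card S"
    using \<open>finite ?F\<close> \<open>card ?F = r ^ card S\<close> card_mono[of ?F ?Sep] by auto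
  ultimately have "r ^ card S \<le> card ?Good + card ?Sep"
    by linarith
  then have "real (r ^ card S) \<le> real (card ?Good) + real (card ?Sep)"
    by (simp only: of_nat_add[symmetric] of_nat_le_iff)
  then show ?thesis
    by simp
qed

lemma card_almost_separated_labellings_le_power:
  fixes S :: "'a::euclidean_space set"
  assumes "finite S" and "0 < card S" and "0 < r"
  shows "card {f \<in> S \<rightarrow>\<^sub>E {1..r}. almost_separated S r f}
    \<le> (r * card S) ^ ((r - 1) * (DIM('a) + 1)) * ((r - 1) ^ card S + card S * (r - 1) ^ (card S - 1))"
proof -
  let ?n = "card S" and ?e = "DIM('a) + 1"
  have "card (halfspace_traces S) ^ (r - 1) \<le> ((?n + 1) ^ ?e) ^ (r - 1)"
    using card_halfspace_traces[OF assms(1)] by (rule power_mono) simp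
  also have "\<dots> \<le> (r * ?n) ^ ((r - 1) * ?e)"
  proof (cases "r = 1")
    case False
    then have "2 \<le> r"
      using assms(3) by simp
    have "?n + 1 \<le> 2 * ?n"
      using assms(2) by simp
    also have "\<dots> \<le> r * ?n"
      using \<open>2 \<le> r\<close> by (rule mult_le_mono1)
    finally have "?n + 1 \<le> r * ?n" .
    have "((?n + 1) ^ ?e) ^ (r - 1) = (?n + 1) ^ ((r - 1) * ?e)"
      by (metis power_mult mult.commute)
    also have "\<dots> \<le> (r * ?n) ^ ((r - 1) * ?e)"
      using \<open>?n + 1 \<le> r * ?n\<close> by (rule power_mono) simp
    finally show ?thesis .
  qed simp
  finally show ?thesis
    using card_almost_separated_labellings[OF assms(1,3)] by (meson le_trans mult_le_mono1)
qed

section \<open>Probability estimate\<close>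

text \<open>The left-hand side is \<open>P[Bin(n, 1/r) \<le> 1]\<close>; Hoeffding's inequality applies with
  deviation \<open>n / r - 1\<close>.\<close>

lemma at_most_one_success_le_exp:
  assumes "1 \<le> r" and "r \<le> n"
  shows "(real (r - 1) ^ n + real n * real (r - 1) ^ (n - 1)) / real r ^ n
    \<le> exp (- 2 * (real n - real r)\<^sup>2 / (real n * real r ^ 2))"
proof -
  define p where "p = 1 / real r"
  define \<epsilon> where "\<epsilon> = real n / real r - 1"
  have "0 < n" and "p \<in> {0..1}" and "0 \<le> \<epsilon>"
    using assms by (auto simp: p_def \<epsilon>_def field_simps)
  interpret binomial_distribution n p
    by unfold_locales (rule \<open>p \<in> {0..1}\<close>)
  have "{x. real x \<le> real n * p - \<epsilon>} = {0, 1}"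
    using assms by (auto simp: p_def \<epsilon>_def)
  then have "measure_pmf.prob (binomial_pmf n p) {0, 1} \<le> exp (- 2 * \<epsilon>\<^sup>2 / real n)"
    using prob_le[OF \<open>0 < n\<close> \<open>0 \<le> \<epsilon>\<close>] by simp
  moreover have "measure_pmf.prob (binomial_pmf n p) {0, 1}
      = (real (r - 1) ^ n + real n * real (r - 1) ^ (n - 1)) / real r ^ n"
  proof -
    have "1 - p = real (r - 1) / real r"
      using assms by (simp add: p_def of_nat_diff field_simps)
    moreover have "real r ^ n = real r * real r ^ (n - 1)"
      using \<open>0 < n\<close> by (simp add: power_eq_if)
    ultimately show ?thesis
      using \<open>p \<in> {0..1}\<close> assms
      by (simp add: measure_measure_pmf_finite pmf_binomial p_def power_divide field_simps)
  qed
  moreover have "- 2 * \<epsilon>\<^sup>2 / real n = - 2 * (real n - real r)\<^sup>2 / (real n * real r ^ 2)"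
    using assms by (simp add: \<epsilon>_def field_simps)
  ultimately show ?thesis
    by simp
qed

lemma one_le_tverberg_bound_if_less:
  assumes "0 < n" and "n < r" and "2 \<le> D"
  shows "1 \<le> real r ^ D * real n ^ D * exp (- 2 * (real n - real r)\<^sup>2 / (real n * real r ^ 2))"
proof -
  define E where "E = 2 * (real n - real r)\<^sup>2 / (real n * real r ^ 2)"
  have "exp E \<le> real r ^ 2"
  proof (cases "r = 2")
    case True
    with assms have "n = 1"
      by simp
    with True have "E = 1 / 2"
      by (simp add: E_def)
    then have "exp E \<le> 2"
      using exp_half_le2 by (simp only:)
    with True show ?thesis
      by simp
  next
    case False
    with assms have "3 \<le> r"
      by presburger
    have "(real r - real n)\<^sup>2 \<le> real r ^ 2"
      using assms by (intro power_mono) auto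
    also have "\<dots> \<le> real n * real r ^ 2"
      using assms by simp
    finally have "(real n - real r)\<^sup>2 \<le> real n * real r ^ 2"
      by (simp add: power2_commute)
    then have "E \<le> 2"
      using assms by (simp add: E_def divide_le_eq)
    then have "exp E \<le> exp 1 ^ 2"
      by (simp add: exp_of_nat_mult[symmetric])
    also have "\<dots> \<le> 3 ^ 2"
      using exp_le by (intro power_mono) auto
    also have "\<dots> \<le> real r ^ 2"
      using \<open>3 \<le> r\<close> by (intro power_mono) auto
    finally show ?thesis .
  qed
  also have "\<dots> \<le> real r ^ D"
    using assms by (intro power_increasing) auto
  also have "\<dots> \<le> real r ^ D * real n ^ D"
    using assms by (simp add: mult_le_cancel_left1 one_le_power)
  finally show ?thesis
    by (simp add: E_def exp_minus field_simps)
qed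

lemma tverberg_labellings_ratio_ge:
  fixes S :: "'a::euclidean_space set"
  assumes "finite S" and "0 < r" and "r \<le> card S"
  defines "n \<equiv> card S" and "D \<equiv> (r - 1) * (DIM('a) + 1)"
  shows "1 - real r ^ D * real n ^ D * exp (- 2 * (real n - real r)\<^sup>2 / (real n * real r ^ 2))
    \<le> real (card {f \<in> S \<rightarrow>\<^sub>E {1..r}. tverberg_partition S r (label_partition S r f) \<and>
          tverberg_degree S r (label_partition S r f) = n * (r - 1)}) / real r ^ n"
proof -
  let ?sep = "real (card {f \<in> S \<rightarrow>\<^sub>E {1..r}. almost_separated S r f})"
  let ?Q = "real (r - 1) ^ n + real n * real (r - 1) ^ (n - 1)"
  have "0 < n" and "0 < real r ^ n"
    using assms by (simp_all add: n_def)
  have "?sep \<le> (real r * real n) ^ D * ?Q"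
    using card_almost_separated_labellings_le_power[OF assms(1) _ assms(2)] \<open>0 < n\<close>
    unfolding n_def D_def by (metis (mono_tags, lifting) of_nat_le_iff of_nat_add of_nat_mult of_nat_power)
  then have "?sep / real r ^ n \<le> (real r * real n) ^ D * (?Q / real r ^ n)"
    using \<open>0 < real r ^ n\<close> by (simp add: divide_right_mono)
  also have "\<dots> \<le> (real r * real n) ^ D * exp (- 2 * (real n - real r)\<^sup>2 / (real n * real r ^ 2))"
    using assms at_most_one_success_le_exp[of r n] by (intro mult_left_mono) (simp_all add: n_def)
  finally have "1 - real r ^ D * real n ^ D * exp (- 2 * (real n - real r)\<^sup>2 / (real n * real r ^ 2))
      \<le> 1 - ?sep / real r ^ n"
    by (simp add: power_mult_distrib)
  also have "\<dots> = (real r ^ n - ?sep) / real r ^ n"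
    using \<open>0 < real r ^ n\<close> by (simp add: diff_divide_distrib)
  also have "\<dots> \<le> real (card {f \<in> S \<rightarrow>\<^sub>E {1..r}. tverberg_partition S r (label_partition S r f) \<and>
          tverberg_degree S r (label_partition S r f) = n * (r - 1)}) / real r ^ n"
    using card_tverberg_labellings_ge[OF assms(1), of r] \<open>0 < real r ^ n\<close>
    by (intro divide_right_mono) (simp_all add: n_def)
  finally show ?thesis .
qed

theorem theorem1p7:
  fixes S :: "(real ^ 'd) set" and n r d :: nat
  assumes "n > 0" and "r > 0" and "d > 0" and "CARD('d) = d"
    and "finite S" and "card S = n"
  shows "real (card {f \<in> S \<rightarrow>\<^sub>E {1..r}.
            tverberg_partition S r (label_partition S r f) \<and>
            tverberg_degree S r (label_partition S r f) = n * (r - 1)}) / real r ^ n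
         \<ge> 1 - real r ^ ((r - 1) * (d + 1)) * real n ^ ((r - 1) * (d + 1))
               * exp (- 2 * (real n - real r)^2 / (real n * real r ^ 2))"
proof (cases "n < r")
  case True
  then have "2 \<le> (r - 1) * (d + 1)"
    using assms(1,3) mult_le_mono[of 1 "r - 1" 2 "d + 1"] by simp
  with True assms(1) show ?thesis
    using one_le_tverberg_bound_if_less[of n r "(r - 1) * (d + 1)"]
    by (smt (verit, best) divide_nonneg_nonneg of_nat_0_le_iff zero_le_power)
next
  case False
  then show ?thesis
    using tverberg_labellings_ratio_ge[OF assms(5,2)] assms(4,6) by simp
qed

end
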